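(* For every partition $\mathcal P=(S_1,\dots,S_n)$ of $V(G)$ into sets of size $r$ and $T=T_{\vec B,\mathcal P}$, $$|\mathbb E_{\vec B}(\xi)|\le\frac1{nr(r-1)}\sum_{i=1}^n\sum_{\{w,w'\}\subseteq S_i,\,w\ne w'}\big(W_w(w')+W_{w'}(w)\big).$$
   Context: Let $n,p,q$ be positive integers, $r=p+q$, $G$ a finite simple graph with $|V(G)|=rn$; $\mathcal N(v)$ neighbor set. For each $v$, $f_v:2^{\mathcal N(v)}\to\mathbb R$ with $f_v(\emptyset)=0$. $\sigma_T(v)=q$ if $v\in T$, $-p$ otherwise; for $|T|=pn$, $\xi=\frac1{pqn}\sum_v\sigma_T(v)f_v(T\cap\mathcal N(v))$. Weight of $w$ on $v$: $W_v(w)=\sup_{A\subseteq\mathcal N(v)\setminus\{w\}}|f_v(A)-f_v(A\cup\{w\})|$ if $w\in\mathcal N(v)$, and $W_v(w)=0$ otherwise. Restricted randomization: $S_i=\{w_i^1,\dots,w_i^r\}$, $B_1,\dots,B_n$ i.i.d. uniform $p$-subsets of $\{1,\dots,r\}$, $T_{\vec B,\mathcal P}=\{w_i^j:j\in B_i\}$. *)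

theory Defs
  imports Complex_Main "HOL-Library.FuncSet"
begin

text \<open>Simple graph on a finite vertex set V given by an edge relation E
  (assumed symmetric and irreflexive in the theorem).\<close>

definition nbhd :: "('a \<Rightarrow> 'a \<Rightarrow> bool) \<Rightarrow> 'a set \<Rightarrow> 'a \<Rightarrow> 'a set" where
  "nbhd E V v = {u \<in> V. E v u}"

definition weight :: "('a \<Rightarrow> 'a \<Rightarrow> bool) \<Rightarrow> 'a set \<Rightarrow> ('a \<Rightarrow> 'a set \<Rightarrow> real) \<Rightarrow> 'a \<Rightarrow> 'a \<Rightarrow> real" where
  "weight E V f v w =
     (if w \<in> nbhd E V v
      then (SUP A \<in> {A. A \<subseteq> nbhd E V v - {w}}. \<bar>f v A - f v (A \<union> {w})\<bar>)
      else 0)"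

definition sgn_T :: "nat \<Rightarrow> nat \<Rightarrow> 'a set \<Rightarrow> 'a \<Rightarrow> real" where
  "sgn_T p q T v = (if v \<in> T then real q else - real p)"

definition xi :: "('a \<Rightarrow> 'a \<Rightarrow> bool) \<Rightarrow> 'a set \<Rightarrow> ('a \<Rightarrow> 'a set \<Rightarrow> real)
                 \<Rightarrow> nat \<Rightarrow> nat \<Rightarrow> nat \<Rightarrow> 'a set \<Rightarrow> real" where
  "xi E V f p q n T =
     (1 / (real p * real q * real n)) * (\<Sum>v\<in>V. sgn_T p q T v * f v (T \<inter> nbhd E V v))"

definition psubsets :: "nat \<Rightarrow> nat \<Rightarrow> nat set set" where
  "psubsets r p = {B. B \<subseteq> {1..r} \<and> card B = p}"

text \<open>T_{B,P} = {w_i^j : j in B_i}, where w i j is the j-th vertex of block S_i.\<close>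
definition restrT :: "(nat \<Rightarrow> nat \<Rightarrow> 'a) \<Rightarrow> nat \<Rightarrow> (nat \<Rightarrow> nat set) \<Rightarrow> 'a set" where
  "restrT w n B = {w i j | i j. i \<in> {1..n} \<and> j \<in> B i}"

text \<open>Expectation of xi over B_1,...,B_n i.i.d. uniform p-subsets of {1..r},
  i.e. the uniform average over all tuples (B_1,...,B_n).\<close>
definition expected_xi :: "('a \<Rightarrow> 'a \<Rightarrow> bool) \<Rightarrow> 'a set \<Rightarrow> ('a \<Rightarrow> 'a set \<Rightarrow> real)
                 \<Rightarrow> nat \<Rightarrow> nat \<Rightarrow> nat \<Rightarrow> (nat \<Rightarrow> nat \<Rightarrow> 'a) \<Rightarrow> real" where
  "expected_xi E V f p q n w =
     (let Bs = PiE {1..n} (\<lambda>_. psubsets (p + q) p)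
      in (\<Sum>B\<in>Bs. xi E V f p q n (restrT w n B)) / real (card Bs))"

end

theory Submission
  imports Defs
begin

text \<open>Fix a vertex \<open>v = w i j\<close>. Its sign depends on the block \<open>B i\<close> only, and the signs
  (\<open>q\<close> if \<open>j \<in> B i\<close>, \<open>-p\<close> otherwise) cancel in pairs: pairs \<open>(X, k)\<close> of a \<open>p\<close>-subset
  \<open>X\<close> with \<open>j \<in> X\<close> and an index \<open>k \<notin> X\<close> correspond bijectively, via \<open>X \<mapsto> X - {j} \<union> {k}\<close>, to
  pairs \<open>(Y, k)\<close> of a \<open>p\<close>-subset \<open>Y\<close> with \<open>j \<notin> Y\<close> and an index \<open>k \<in> Y\<close>. So the contribution
  of \<open>v\<close> to the sum of \<open>\<xi>\<close> over all tuples is a sum of differences \<open>f v T - f v T'\<close>, where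
  \<open>T'\<close> arises from \<open>T\<close> by exchanging \<open>v\<close> for \<open>w i k\<close>. Since \<open>v\<close> is not its own neighbour,
  each difference is at most the weight of \<open>w i k\<close> on \<open>v\<close>, and a fixed \<open>k\<close> occurs for a
  fraction \<open>p q / (r (r - 1))\<close> of all tuples.\<close>

lemma choose_mult_mult_diff:
  assumes "0 < p"
  shows "(r choose p) * p * (r - p) = ((r - 2) choose (p - 1)) * r * (r - 1)"
proof -
  have "p * (r choose p) = r * ((r - 1) choose (p - 1))"
    using assms by (rule times_binomial_minus1_eq)
  moreover have "(r - p) * ((r - 1) choose (p - 1)) = (r - 1) * ((r - 2) choose (p - 1))"
    using binomial_absorb_comp[of "r - 1" "p - 1"] assms by (simp add: numeral_2_eq_2)
  ultimately show ?thesis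
    by (metis mult.commute mult.left_commute)
qed

lemma card_subsets_mem_not_mem:
  assumes "finite A" and "j \<in> A" and "k \<in> A" and "j \<noteq> k" and "0 < p"
  shows "card {X. X \<subseteq> A \<and> card X = p \<and> j \<in> X \<and> k \<notin> X} = (card A - 2) choose (p - 1)"
proof -
  have "bij_betw (insert j) {Y. Y \<subseteq> A - {j, k} \<and> card Y = p - 1}
      {X. X \<subseteq> A \<and> card X = p \<and> j \<in> X \<and> k \<notin> X}"
  proof (rule bij_betw_byWitness[where f' = "\<lambda>X. X - {j}"])
    show "(insert j) ` {Y. Y \<subseteq> A - {j, k} \<and> card Y = p - 1}
        \<subseteq> {X. X \<subseteq> A \<and> card X = p \<and> j \<in> X \<and> k \<notin> X}"
      using assms by (auto simp: card_insert_if finite_subset)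
    show "(\<lambda>X. X - {j}) ` {X. X \<subseteq> A \<and> card X = p \<and> j \<in> X \<and> k \<notin> X}
        \<subseteq> {Y. Y \<subseteq> A - {j, k} \<and> card Y = p - 1}"
      using assms by (auto simp: finite_subset)
  qed auto
  moreover have "card (A - {j, k}) = card A - 2"
    using assms by (simp add: card_Diff_subset)
  ultimately show ?thesis
    using n_subsets[of "A - {j, k}" "p - 1"] assms(1) by (simp add: bij_betw_same_card)
qed

lemma sum_subsets_mem_sum_compl:
  fixes c :: "'a \<Rightarrow> real"
  assumes "finite A" and "j \<in> A" and "0 < p"
  shows "(\<Sum>X\<in>{X. X \<subseteq> A \<and> card X = p \<and> j \<in> X}. \<Sum>k\<in>A - X. c k)
       = real ((card A - 2) choose (p - 1)) * (\<Sum>k\<in>A - {j}. c k)"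
proof -
  define Pin where "Pin = {X. X \<subseteq> A \<and> card X = p \<and> j \<in> X}"
  have "finite Pin"
    using \<open>finite A\<close> unfolding Pin_def by (auto intro: finite_subset[of _ "Pow A"])
  have "(\<Sum>X\<in>Pin. \<Sum>k\<in>A - X. c k) = (\<Sum>X\<in>Pin. \<Sum>k\<in>{k \<in> A - {j}. k \<notin> X}. c k)"
    by (intro sum.cong) (auto simp: Pin_def)
  also have "\<dots> = (\<Sum>k\<in>A - {j}. \<Sum>X\<in>{X \<in> Pin. k \<notin> X}. c k)"
    using \<open>finite Pin\<close> \<open>finite A\<close> by (intro sum.swap_restrict) auto
  also have "\<dots> = (\<Sum>k\<in>A - {j}. real ((card A - 2) choose (p - 1)) * c k)"
  proof (intro sum.cong refl)
    fix k assume "k \<in> A - {j}"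
    then have "card {X \<in> Pin. k \<notin> X} = (card A - 2) choose (p - 1)"
      using card_subsets_mem_not_mem[of A j k p] assms by (auto simp: Pin_def conj_assoc)
    then show "(\<Sum>X\<in>{X \<in> Pin. k \<notin> X}. c k) = real ((card A - 2) choose (p - 1)) * c k"
      by simp
  qed
  also have "\<dots> = real ((card A - 2) choose (p - 1)) * (\<Sum>k\<in>A - {j}. c k)"
    by (rule sum_distrib_left[symmetric])
  finally show ?thesis
    unfolding Pin_def .
qed

lemma sum_exchange_pairs_eq:
  assumes "finite A" and "j \<in> A"
  shows "(\<Sum>(Y, k)\<in>Sigma {Y. Y \<subseteq> A \<and> card Y = p \<and> j \<notin> Y} (\<lambda>Y. Y). g Y)
       = (\<Sum>(X, k)\<in>Sigma {X. X \<subseteq> A \<and> card X = p \<and> j \<in> X} (\<lambda>X. A - X). g (insert k (X - {j})))"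
proof (rule sum.reindex_bij_witness[of _ "\<lambda>(X, k). (insert k (X - {j}), k)" "\<lambda>(Y, k). (insert j (Y - {k}), k)"])
  fix b assume "b \<in> Sigma {Y. Y \<subseteq> A \<and> card Y = p \<and> j \<notin> Y} (\<lambda>Y. Y)"
  then obtain Y k where b: "b = (Y, k)" "Y \<subseteq> A" "card Y = p" "j \<notin> Y" "k \<in> Y"
    by auto
  have "finite Y"
    using b(2) \<open>finite A\<close> by (rule finite_subset)
  then have "0 < card Y"
    using b(5) by (auto simp: card_gt_0_iff)
  show "(\<lambda>(X, k). (insert k (X - {j}), k)) ((\<lambda>(Y, k). (insert j (Y - {k}), k)) b) = b"
    using b by auto
  show "(\<lambda>(Y, k). (insert j (Y - {k}), k)) b \<in> Sigma {X. X \<subseteq> A \<and> card X = p \<and> j \<in> X} (\<lambda>X. A - X)"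
    using b \<open>finite Y\<close> \<open>0 < card Y\<close> \<open>j \<in> A\<close> by (auto simp: card_insert_if)
next
  fix a assume "a \<in> Sigma {X. X \<subseteq> A \<and> card X = p \<and> j \<in> X} (\<lambda>X. A - X)"
  then obtain X k where a: "a = (X, k)" "X \<subseteq> A" "card X = p" "j \<in> X" "k \<in> A" "k \<notin> X"
    by auto
  have "finite X"
    using a(2) \<open>finite A\<close> by (rule finite_subset)
  then have "0 < card X"
    using a(4) by (auto simp: card_gt_0_iff)
  show "(\<lambda>(Y, k). (insert j (Y - {k}), k)) ((\<lambda>(X, k). (insert k (X - {j}), k)) a) = a"
    using a by auto
  show "(\<lambda>(X, k). (insert k (X - {j}), k)) a \<in> Sigma {Y. Y \<subseteq> A \<and> card Y = p \<and> j \<notin> Y} (\<lambda>Y. Y)"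
    using a \<open>finite X\<close> \<open>0 < card X\<close> by (auto simp: card_insert_if)
qed (auto simp: insert_absorb)

lemma sum_signed_subsets_eq_sum_exchanges:
  fixes g :: "'a set \<Rightarrow> real"
  assumes "finite A" and "j \<in> A"
  shows "(\<Sum>X\<in>{X. X \<subseteq> A \<and> card X = p}. (if j \<in> X then real (card A - p) else - real p) * g X)
       = (\<Sum>X\<in>{X. X \<subseteq> A \<and> card X = p \<and> j \<in> X}. \<Sum>k\<in>A - X. g X - g (insert k (X - {j})))"
proof -
  define Pin where "Pin = {X. X \<subseteq> A \<and> card X = p \<and> j \<in> X}"
  define Pout where "Pout = {X. X \<subseteq> A \<and> card X = p \<and> j \<notin> X}"
  have fin: "finite Pin" "finite Pout"
    using \<open>finite A\<close> unfolding Pin_def Pout_def by (auto intro: finite_subset[of _ "Pow A"])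
  have split: "{X. X \<subseteq> A \<and> card X = p} = Pin \<union> Pout" and "Pin \<inter> Pout = {}"
    unfolding Pin_def Pout_def by auto
  have "(\<Sum>X\<in>Pin. (if j \<in> X then real (card A - p) else - real p) * g X)
      = (\<Sum>X\<in>Pin. real (card A - p) * g X)"
    by (rule sum.cong) (auto simp: Pin_def)
  moreover have "(\<Sum>X\<in>Pout. (if j \<in> X then real (card A - p) else - real p) * g X)
      = - (\<Sum>X\<in>Pout. real p * g X)"
    by (subst sum_negf[symmetric], rule sum.cong) (auto simp: Pout_def)
  ultimately have "(\<Sum>X\<in>{X. X \<subseteq> A \<and> card X = p}. (if j \<in> X then real (card A - p) else - real p) * g X)
      = (\<Sum>X\<in>Pin. real (card A - p) * g X) - (\<Sum>X\<in>Pout. real p * g X)"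
    unfolding split using fin \<open>Pin \<inter> Pout = {}\<close> by (simp add: sum.union_disjoint)
  also have "(\<Sum>X\<in>Pin. real (card A - p) * g X) = (\<Sum>X\<in>Pin. \<Sum>k\<in>A - X. g X)"
    using \<open>finite A\<close> by (intro sum.cong) (auto simp: Pin_def card_Diff_subset finite_subset)
  also have "(\<Sum>X\<in>Pout. real p * g X) = (\<Sum>(Y, k)\<in>Sigma Pout (\<lambda>Y. Y). g Y)"
    using fin \<open>finite A\<close> by (subst sum.Sigma[symmetric]) (auto simp: Pout_def finite_subset)
  also have "\<dots> = (\<Sum>(X, k)\<in>Sigma Pin (\<lambda>X. A - X). g (insert k (X - {j})))"
    unfolding Pin_def Pout_def using assms by (rule sum_exchange_pairs_eq)
  finally show ?thesis
    using fin \<open>finite A\<close> unfolding Pin_def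
    by (simp add: sum.Sigma[symmetric] sum_subtractf)
qed

lemma sum_PiE_split:
  assumes "i \<in> I"
  shows "(\<Sum>B\<in>Pi\<^sub>E I F. g B) = (\<Sum>B\<in>Pi\<^sub>E (I - {i}) F. \<Sum>X\<in>F i. g (B(i := X)))"
proof -
  have "Pi\<^sub>E I F = (\<lambda>(X, B). B(i := X)) ` (F i \<times> Pi\<^sub>E (I - {i}) F)"
    using PiE_insert_eq[of i "I - {i}" F] assms by (simp add: insert_absorb)
  then have "(\<Sum>B\<in>Pi\<^sub>E I F. g B) = (\<Sum>(X, B)\<in>F i \<times> Pi\<^sub>E (I - {i}) F. g (B(i := X)))"
    using sum.reindex[OF inj_combinator[of i "I - {i}" F], of g] by (simp add: case_prod_unfold)
  also have "\<dots> = (\<Sum>X\<in>F i. \<Sum>B\<in>Pi\<^sub>E (I - {i}) F. g (B(i := X)))"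
    by (rule sum.cartesian_product[symmetric])
  finally show ?thesis
    by (simp add: sum.swap[of _ "F i"])
qed

lemma card_PiE_split:
  assumes "finite I" and "i \<in> I"
  shows "card (Pi\<^sub>E I F) = card (F i) * card (Pi\<^sub>E (I - {i}) F)"
  using assms by (simp add: card_PiE prod.remove)

lemma card_PiE_psubsets_remove_mult_choose:
  fixes n :: nat
  assumes "i \<in> {1..n}" and "0 < p" and "0 < q"
  shows "real (card (Pi\<^sub>E ({1..n} - {i}) (\<lambda>_. psubsets (p + q) p))) * real ((p + q - 2) choose (p - 1))
       = real (card (Pi\<^sub>E {1..n} (\<lambda>_. psubsets (p + q) p))) * (real p * real q / (real (p + q) * (real (p + q) - 1)))"
proof -
  define r where "r = p + q"
  have "card (psubsets r p) = r choose p"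
    using n_subsets[of "{1..r}" p] by (simp add: psubsets_def)
  then have card: "card (Pi\<^sub>E {1..n} (\<lambda>_. psubsets r p))
      = (r choose p) * card (Pi\<^sub>E ({1..n} - {i}) (\<lambda>_. psubsets r p))"
    using card_PiE_split[OF finite_atLeastAtMost assms(1), of "\<lambda>_. psubsets r p"] by simp
  have "(r choose p) * p * q = ((r - 2) choose (p - 1)) * r * (r - 1)"
    using choose_mult_mult_diff[of p r] assms(2) by (simp add: r_def)
  then have "real (r choose p) * real p * real q = real ((r - 2) choose (p - 1)) * real r * real (r - 1)"
    by (metis of_nat_mult)
  moreover have "real (r - 1) = real r - 1"
    using assms(2) by (simp add: r_def)
  moreover have "0 < real r * (real r - 1)"
    using assms(2,3) by (simp add: r_def)
  ultimately have "real ((r - 2) choose (p - 1)) = real (r choose p) * (real p * real q / (real r * (real r - 1)))"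
    by (simp add: field_simps)
  then show ?thesis
    unfolding r_def[symmetric] card by simp
qed

lemma sum_bij_betw_product_eq:
  assumes "bij_betw (\<lambda>(i, j). w i j) (I \<times> J) V"
  shows "(\<Sum>v\<in>V. g v) = (\<Sum>i\<in>I. \<Sum>j\<in>J. g (w i j))"
  using sum.reindex_bij_betw[OF assms, of g] by (simp add: sum.cartesian_product case_prod_unfold)

lemma sum_upper_pairs_eq_sum_off_diag:
  fixes a :: "nat \<Rightarrow> nat \<Rightarrow> real"
  shows "(\<Sum>j\<in>{1..r}. \<Sum>j'\<in>{j<..r}. a j j' + a j' j) = (\<Sum>j\<in>{1..r}. \<Sum>k\<in>{1..r} - {j}. a j k)"
proof -
  have above: "(\<Sum>j\<in>{1..r}. \<Sum>j'\<in>{j<..r}. a j j') = (\<Sum>j\<in>{1..r}. \<Sum>k\<in>{k \<in> {1..r}. j < k}. a j k)"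
    by (intro sum.cong) auto
  have "(\<Sum>j\<in>{1..r}. \<Sum>j'\<in>{j<..r}. a j' j) = (\<Sum>j\<in>{1..r}. \<Sum>j'\<in>{k \<in> {1..r}. j < k}. a j' j)"
    by (intro sum.cong) auto
  also have "\<dots> = (\<Sum>j'\<in>{1..r}. \<Sum>j\<in>{j \<in> {1..r}. j < j'}. a j' j)"
    by (rule sum.swap_restrict) auto
  finally have below: "(\<Sum>j\<in>{1..r}. \<Sum>j'\<in>{j<..r}. a j' j)
      = (\<Sum>j\<in>{1..r}. \<Sum>k\<in>{k \<in> {1..r}. k < j}. a j k)" .
  have off_diag: "(\<Sum>k\<in>{1..r} - {j}. a j k)
      = (\<Sum>k\<in>{k \<in> {1..r}. j < k}. a j k) + (\<Sum>k\<in>{k \<in> {1..r}. k < j}. a j k)" for j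
  proof -
    have split: "{1..r} - {j} = {k \<in> {1..r}. j < k} \<union> {k \<in> {1..r}. k < j}"
      by auto
    show ?thesis
      unfolding split by (rule sum.union_disjoint) auto
  qed
  show ?thesis
    by (simp only: off_diag sum.distrib above below)
qed

lemma abs_diff_insert_le_weight:
  assumes "finite V" and "u \<notin> Y"
  shows "\<bar>f v (Y \<inter> nbhd E V v) - f v (insert u Y \<inter> nbhd E V v)\<bar> \<le> weight E V f v u"
proof (cases "u \<in> nbhd E V v")
  case True
  let ?A = "Y \<inter> nbhd E V v"
  have "insert u Y \<inter> nbhd E V v = ?A \<union> {u}"
    using True by auto
  moreover have "?A \<in> Pow (nbhd E V v - {u})"
    using \<open>u \<notin> Y\<close> by auto
  moreover have "finite (Pow (nbhd E V v - {u}))"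
    using \<open>finite V\<close> by (simp add: nbhd_def)
  ultimately show ?thesis
    using True by (auto simp: weight_def Pow_def intro!: cSUP_upper bdd_above_finite)
next
  case False
  then have "insert u Y \<inter> nbhd E V v = Y \<inter> nbhd E V v"
    by auto
  with False show ?thesis
    by (simp add: weight_def)
qed

lemma restrT_eq_image: "restrT w n B = (\<lambda>(i, j). w i j) ` Sigma {1..n} B"
  by (force simp: restrT_def)

lemma mem_restrT_iff:
  assumes "inj_on (\<lambda>(i, j). w i j) ({1..n} \<times> {1..r})"
    and "\<forall>l\<in>{1..n}. B l \<subseteq> {1..r}" and "i \<in> {1..n}" and "m \<in> {1..r}"
  shows "w i m \<in> restrT w n B \<longleftrightarrow> m \<in> B i"
proof -
  have "Sigma {1..n} B \<subseteq> {1..n} \<times> {1..r}"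
    using assms(2) by blast
  then show ?thesis
    using inj_on_image_mem_iff[OF assms(1), of "(i, m)"] assms(3,4)
    by (simp add: restrT_eq_image)
qed

lemma restrT_exchange:
  assumes "inj_on (\<lambda>(i, j). w i j) ({1..n} \<times> {1..r})"
    and "\<forall>l\<in>{1..n}. B l \<subseteq> {1..r}" and "i \<in> {1..n}" and "j \<in> {1..r}"
  shows "restrT w n (B(i := insert k (B i - {j}))) = insert (w i k) (restrT w n B - {w i j})"
proof -
  have "Sigma {1..n} (B(i := insert k (B i - {j}))) = insert (i, k) (Sigma {1..n} B - {(i, j)})"
    using assms(3) by (auto split: if_splits)
  moreover have "(\<lambda>(i, j). w i j) ` (Sigma {1..n} B - {(i, j)})
      = (\<lambda>(i, j). w i j) ` Sigma {1..n} B - {w i j}"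
    using inj_on_image_set_diff[OF assms(1), of "Sigma {1..n} B" "{(i, j)}"] assms by auto
  ultimately show ?thesis
    by (simp add: restrT_eq_image)
qed

lemma abs_diff_restrT_exchange_le_weight:
  assumes inj: "inj_on (\<lambda>(i, j). w i j) ({1..n} \<times> {1..r})"
    and "finite V" and "\<not> E (w i j) (w i j)"
    and bounded: "\<forall>l\<in>{1..n}. B l \<subseteq> {1..r}" and "i \<in> {1..n}" and "j \<in> B i" and "k \<in> {1..r} - B i"
  shows "\<bar>f (w i j) (restrT w n B \<inter> nbhd E V (w i j))
          - f (w i j) (restrT w n (B(i := insert k (B i - {j}))) \<inter> nbhd E V (w i j))\<bar>
       \<le> weight E V f (w i j) (w i k)"
proof -
  let ?Y = "restrT w n B - {w i j}"
  have "j \<in> {1..r}"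
    using bounded assms(5,6) by blast
  have "w i k \<notin> ?Y"
    using mem_restrT_iff[OF inj bounded assms(5), of k] assms(7) by auto
  moreover have "restrT w n (B(i := insert k (B i - {j}))) = insert (w i k) ?Y"
    using restrT_exchange[OF inj bounded assms(5) \<open>j \<in> {1..r}\<close>] .
  moreover have "restrT w n B \<inter> nbhd E V (w i j) = ?Y \<inter> nbhd E V (w i j)"
    using assms(3) by (auto simp: nbhd_def)
  ultimately show ?thesis
    using abs_diff_insert_le_weight[OF \<open>finite V\<close>, of "w i k" ?Y f "w i j" E] by simp
qed

lemma sum_sgn_T_eq_sum_exchanges:
  fixes h :: "(nat \<Rightarrow> nat set) \<Rightarrow> real"
  assumes inj: "inj_on (\<lambda>(i, j). w i j) ({1..n} \<times> {1..p + q})"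
    and "i \<in> {1..n}" and "j \<in> {1..p + q}"
  shows "(\<Sum>B\<in>Pi\<^sub>E {1..n} (\<lambda>_. psubsets (p + q) p). sgn_T p q (restrT w n B) (w i j) * h B)
       = (\<Sum>B\<in>Pi\<^sub>E ({1..n} - {i}) (\<lambda>_. psubsets (p + q) p).
            \<Sum>X\<in>{X. X \<subseteq> {1..p + q} \<and> card X = p \<and> j \<in> X}. \<Sum>k\<in>{1..p + q} - X.
              h (B(i := X)) - h (B(i := insert k (X - {j}))))"
  unfolding sum_PiE_split[OF assms(2), where g = "\<lambda>B. sgn_T p q (restrT w n B) (w i j) * h B"]
proof (rule sum.cong[OF refl])
  fix B assume B: "B \<in> Pi\<^sub>E ({1..n} - {i}) (\<lambda>_. psubsets (p + q) p)"
  have "sgn_T p q (restrT w n (B(i := X))) (w i j) = (if j \<in> X then real (card {1..p + q} - p) else - real p)"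
    if "X \<subseteq> {1..p + q}" for X
  proof -
    have "\<forall>l\<in>{1..n}. (B(i := X)) l \<subseteq> {1..p + q}"
      using B that by (auto simp: psubsets_def dest: PiE_mem)
    then show ?thesis
      using mem_restrT_iff[OF inj, of "B(i := X)" i j] assms(2,3) by (simp add: sgn_T_def)
  qed
  then have "(\<Sum>X\<in>psubsets (p + q) p. sgn_T p q (restrT w n (B(i := X))) (w i j) * h (B(i := X)))
      = (\<Sum>X\<in>{X. X \<subseteq> {1..p + q} \<and> card X = p}.
           (if j \<in> X then real (card {1..p + q} - p) else - real p) * h (B(i := X)))"
    by (intro sum.cong) (simp_all add: psubsets_def)
  also have "\<dots> = (\<Sum>X\<in>{X. X \<subseteq> {1..p + q} \<and> card X = p \<and> j \<in> X}. \<Sum>k\<in>{1..p + q} - X.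
      h (B(i := X)) - h (B(i := insert k (X - {j}))))"
    using assms(3) by (intro sum_signed_subsets_eq_sum_exchanges) simp_all
  finally show "(\<Sum>X\<in>psubsets (p + q) p. sgn_T p q (restrT w n (B(i := X))) (w i j) * h (B(i := X)))
      = (\<Sum>X\<in>{X. X \<subseteq> {1..p + q} \<and> card X = p \<and> j \<in> X}. \<Sum>k\<in>{1..p + q} - X.
          h (B(i := X)) - h (B(i := insert k (X - {j}))))" .
qed

lemma abs_sum_vertex_term_le:
  assumes inj: "inj_on (\<lambda>(i, j). w i j) ({1..n} \<times> {1..p + q})"
    and "finite V" and "\<not> E (w i j) (w i j)" and "i \<in> {1..n}" and "j \<in> {1..p + q}" and "0 < p"
  shows "\<bar>\<Sum>B\<in>Pi\<^sub>E {1..n} (\<lambda>_. psubsets (p + q) p).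
            sgn_T p q (restrT w n B) (w i j) * f (w i j) (restrT w n B \<inter> nbhd E V (w i j))\<bar>
       \<le> real (card (Pi\<^sub>E ({1..n} - {i}) (\<lambda>_. psubsets (p + q) p))) * real ((p + q - 2) choose (p - 1))
           * (\<Sum>k\<in>{1..p + q} - {j}. weight E V f (w i j) (w i k))"
proof -
  define r where "r = p + q"
  define h where "h B = f (w i j) (restrT w n B \<inter> nbhd E V (w i j))" for B
  define Pin where "Pin = {X. X \<subseteq> {1..r} \<and> card X = p \<and> j \<in> X}"
  define Bs' where "Bs' = Pi\<^sub>E ({1..n} - {i}) (\<lambda>_. psubsets r p)"
  define W where "W k = weight E V f (w i j) (w i k)" for k
  have exchange: "norm (h (B(i := X)) - h (B(i := insert k (X - {j})))) \<le> W k"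
    if "B \<in> Bs'" "X \<in> Pin" "k \<in> {1..r} - X" for B X k
  proof -
    have "\<forall>l\<in>{1..n}. (B(i := X)) l \<subseteq> {1..r}"
      using that by (auto simp: Bs'_def Pin_def psubsets_def dest: PiE_mem)
    then show ?thesis
      using abs_diff_restrT_exchange_le_weight[where B = "B(i := X)" and i = i and j = j and k = k
          and w = w and E = E, OF inj[folded r_def] \<open>finite V\<close> assms(3)] that assms(4)
      by (simp add: h_def W_def Pin_def)
  qed
  have "\<bar>\<Sum>B\<in>Pi\<^sub>E {1..n} (\<lambda>_. psubsets r p). sgn_T p q (restrT w n B) (w i j) * h B\<bar>
      = norm (\<Sum>B\<in>Bs'. \<Sum>X\<in>Pin. \<Sum>k\<in>{1..r} - X. h (B(i := X)) - h (B(i := insert k (X - {j}))))"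
    using sum_sgn_T_eq_sum_exchanges[OF inj assms(4,5), of h] by (simp add: r_def Pin_def Bs'_def)
  also have "\<dots> \<le> (\<Sum>B\<in>Bs'. \<Sum>X\<in>Pin. \<Sum>k\<in>{1..r} - X. W k)"
    using exchange by (intro sum_norm_le) blast
  also have "\<dots> = real (card Bs') * real ((r - 2) choose (p - 1)) * (\<Sum>k\<in>{1..r} - {j}. W k)"
    using sum_subsets_mem_sum_compl[of "{1..r}" j p W] assms(5,6) by (simp add: Pin_def r_def)
  finally show ?thesis
    by (simp add: r_def h_def Bs'_def W_def)
qed

lemma sum_xi_restrT_eq:
  assumes "bij_betw (\<lambda>(i, j). w i j) ({1..n} \<times> J) V"
  shows "(\<Sum>B\<in>Bs. xi E V f p q n (restrT w n B))
       = (\<Sum>i\<in>{1..n}. \<Sum>j\<in>J. \<Sum>B\<in>Bs.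
            sgn_T p q (restrT w n B) (w i j) * f (w i j) (restrT w n B \<inter> nbhd E V (w i j)))
         / (real p * real q * real n)"
proof -
  have "(\<Sum>B\<in>Bs. xi E V f p q n (restrT w n B))
      = (\<Sum>B\<in>Bs. \<Sum>v\<in>V. sgn_T p q (restrT w n B) v * f v (restrT w n B \<inter> nbhd E V v))
        / (real p * real q * real n)"
    by (simp add: xi_def sum_divide_distrib)
  also have "(\<Sum>B\<in>Bs. \<Sum>v\<in>V. sgn_T p q (restrT w n B) v * f v (restrT w n B \<inter> nbhd E V v))
      = (\<Sum>v\<in>V. \<Sum>B\<in>Bs. sgn_T p q (restrT w n B) v * f v (restrT w n B \<inter> nbhd E V v))"
    by (rule sum.swap)
  finally show ?thesis
    by (simp add: sum_bij_betw_product_eq[OF assms])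
qed

lemma abs_expected_xi_le_sum_off_diag:
  assumes "0 < p" and "0 < q" and "finite V" and "\<And>v. \<not> E v v"
    and bij: "bij_betw (\<lambda>(i, j). w i j) ({1..n} \<times> {1..p + q}) V"
  shows "\<bar>expected_xi E V f p q n w\<bar>
       \<le> 1 / (real n * real (p + q) * (real (p + q) - 1)) *
         (\<Sum>i\<in>{1..n}. \<Sum>j\<in>{1..p + q}. \<Sum>k\<in>{1..p + q} - {j}. weight E V f (w i j) (w i k))"
proof -
  define r where "r = p + q"
  define Bs where "Bs = Pi\<^sub>E {1..n} (\<lambda>_. psubsets r p)"
  define K where "K = real p * real q / (real r * (real r - 1))"
  define S where "S i j = (\<Sum>B\<in>Bs.
    sgn_T p q (restrT w n B) (w i j) * f (w i j) (restrT w n B \<inter> nbhd E V (w i j)))" for i j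
  define W where "W i j = (\<Sum>k\<in>{1..r} - {j}. weight E V f (w i j) (w i k))" for i j
  have inj: "inj_on (\<lambda>(i, j). w i j) ({1..n} \<times> {1..p + q})"
    using bij by (rule bij_betw_imp_inj_on)
  have "0 < card Bs"
    by (simp add: Bs_def r_def card_PiE psubsets_def n_subsets zero_less_binomial_iff)
  have "expected_xi E V f p q n w = (\<Sum>i\<in>{1..n}. \<Sum>j\<in>{1..r}. S i j) / (real p * real q * real n * real (card Bs))"
    using sum_xi_restrT_eq[OF bij, where Bs = Bs and E = E and f = f and p = p and q = q]
    by (simp add: expected_xi_def Let_def S_def Bs_def r_def)
  moreover have "\<bar>S i j\<bar> \<le> real (card Bs) * K * W i j" if "i \<in> {1..n}" "j \<in> {1..r}" for i j
    using abs_sum_vertex_term_le[where E = E and w = w and i = i and j = j and f = f,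
        OF inj assms(3,4) that[unfolded r_def] assms(1)]
      card_PiE_psubsets_remove_mult_choose[OF that(1) assms(1,2)]
    by (simp add: S_def W_def K_def Bs_def r_def)
  then have "\<bar>\<Sum>i\<in>{1..n}. \<Sum>j\<in>{1..r}. S i j\<bar> \<le> (\<Sum>i\<in>{1..n}. \<Sum>j\<in>{1..r}. real (card Bs) * K * W i j)"
    unfolding real_norm_def[symmetric] by (intro sum_norm_le) auto
  ultimately have "\<bar>expected_xi E V f p q n w\<bar>
      \<le> (\<Sum>i\<in>{1..n}. \<Sum>j\<in>{1..r}. real (card Bs) * K * W i j) / (real p * real q * real n * real (card Bs))"
    by (simp add: abs_divide divide_right_mono)
  also have "\<dots> = K / (real p * real q * real n) * (\<Sum>i\<in>{1..n}. \<Sum>j\<in>{1..r}. W i j)"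
    using \<open>0 < card Bs\<close> by (simp add: sum_distrib_left[symmetric])
  also have "K / (real p * real q * real n) = 1 / (real n * real r * (real r - 1))"
    using assms(1,2) by (simp add: K_def)
  finally show ?thesis
    by (simp add: W_def r_def)
qed

theorem mainTheorem14:
  fixes E :: "'a \<Rightarrow> 'a \<Rightarrow> bool" and V :: "'a set"
    and f :: "'a \<Rightarrow> 'a set \<Rightarrow> real"
    and n p q :: nat and w :: "nat \<Rightarrow> nat \<Rightarrow> 'a"
  assumes "n > 0" and "p > 0" and "q > 0"
    and "finite V"
    and "\<And>u v. E u v \<Longrightarrow> E v u"
    and "\<And>v. \<not> E v v"
    and "card V = (p + q) * n"
    and "\<And>v. f v {} = 0"
    and "bij_betw (\<lambda>(i, j). w i j) ({1..n} \<times> {1..p + q}) V"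
  shows "\<bar>expected_xi E V f p q n w\<bar>
         \<le> 1 / (real n * real (p + q) * (real (p + q) - 1)) *
           (\<Sum>i\<in>{1..n}. \<Sum>j\<in>{1..p + q}. \<Sum>j'\<in>{j<..p + q}.
               weight E V f (w i j) (w i j') + weight E V f (w i j') (w i j))"
  using abs_expected_xi_le_sum_off_diag[OF assms(2,3,4,6,9)]
  unfolding sum_upper_pairs_eq_sum_off_diag .

end
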